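(* If a language $\mathcal L\subseteq\mathcal A^*$ satisfies RBC, then it has eventually constant growth: there are $N_0,K$ such that $p(n+1)-p(n)=K$ for all $n\ge N_0$.
   Context: $\mathcal{A}$ finite alphabet, $\mathcal{A}^*$ nonempty finite words. A language is a set $\mathcal L\subseteq\mathcal A^*$ with $\mathcal A\subseteq\mathcal L$, closed under subwords, and such that each $w\in\mathcal L$ has $a,b\in\mathcal A$ with $awb\in\mathcal L$. $p(n)$ is the number of words of length $n$ in $\mathcal L$. $Ex^\ell(w)=\{a: aw\in\mathcal L\}$, $Ex^r(w)=\{b: wb\in\mathcal L\}$; left special if $|Ex^\ell(w)|\ge2$, right special if $|Ex^r(w)|\ge 2$, bispecial if both. A bispecial $w$ is regular bispecial if there is exactly one $\hat a\in Ex^\ell(w)$ with $\hat aw$ right special and exactly one $\hat b\in Ex^r(w)$ with $w\hat b$ left special. RBC: there is $n_0$ such that every bispecial word of length $\ge n_0$ is regular bispecial. *)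

theory Defs
  imports Main "HOL-Library.Sublist"
begin

text \<open>Words over a finite alphabet (the type 'a, class finite) are lists;
  nonempty words are the nonempty lists. A subword is a factor (contiguous).\<close>

definition is_language :: "'a::finite list set \<Rightarrow> bool" where
  "is_language L \<longleftrightarrow>
     [] \<notin> L \<and>
     (\<forall>a. [a] \<in> L) \<and>
     (\<forall>w\<in>L. \<forall>v. v \<noteq> [] \<and> sublist v w \<longrightarrow> v \<in> L) \<and>
     (\<forall>w\<in>L. \<exists>a b. [a] @ w @ [b] \<in> L)"

definition complexity :: "'a list set \<Rightarrow> nat \<Rightarrow> nat" where
  "complexity L n = card {w \<in> L. length w = n}"

definition ext_left :: "'a list set \<Rightarrow> 'a list \<Rightarrow> 'a set" where
  "ext_left L w = {a. a # w \<in> L}"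

definition ext_right :: "'a list set \<Rightarrow> 'a list \<Rightarrow> 'a set" where
  "ext_right L w = {b. w @ [b] \<in> L}"

definition left_special :: "'a list set \<Rightarrow> 'a list \<Rightarrow> bool" where
  "left_special L w \<longleftrightarrow> w \<in> L \<and> card (ext_left L w) \<ge> 2"

definition right_special :: "'a list set \<Rightarrow> 'a list \<Rightarrow> bool" where
  "right_special L w \<longleftrightarrow> w \<in> L \<and> card (ext_right L w) \<ge> 2"

definition bispecial :: "'a list set \<Rightarrow> 'a list \<Rightarrow> bool" where
  "bispecial L w \<longleftrightarrow> left_special L w \<and> right_special L w"

definition regular_bispecial :: "'a list set \<Rightarrow> 'a list \<Rightarrow> bool" where
  "regular_bispecial L w \<longleftrightarrow> bispecial L w \<and>
     (\<exists>!a. a \<in> ext_left L w \<and> right_special L (a # w)) \<and>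
     (\<exists>!b. b \<in> ext_right L w \<and> left_special L (w @ [b]))"

definition RBC :: "'a list set \<Rightarrow> bool" where
  "RBC L \<longleftrightarrow> (\<exists>n0. \<forall>w. bispecial L w \<and> length w \<ge> n0 \<longrightarrow> regular_bispecial L w)"

end

theory Submission
  imports Defs
begin

text \<open>Write \<open>s(n) = \<Sum>\<^bsub>|w| = n\<^esub> (#Ex\<^sup>r(w) - 1)\<close>; counting words of length \<open>n + 1\<close> by
  their prefix of length \<open>n\<close> shows \<open>p(n+1) - p(n) = s(n)\<close>. Counting them instead by their
  suffix of length \<open>n\<close> gives \<open>s(n+1) = \<Sum>\<^bsub>|w| = n\<^esub> \<Sum>\<^bsub>a \<in> Ex\<^sup>l(w)\<^esub> (#Ex\<^sup>r(aw) - 1)\<close>.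
  Only right special words \<open>aw\<close> contribute, and by RBC a long \<open>w\<close> has at most one of them
  (if \<open>w\<close> is not bispecial this holds trivially), contributing at most \<open>#Ex\<^sup>r(w) - 1\<close>
  since \<open>Ex\<^sup>r(aw) \<subseteq> Ex\<^sup>r(w)\<close>. Hence \<open>s\<close> is eventually non-increasing, and being
  natural-valued it is eventually constant.\<close>

definition words_of_length :: "'a list set \<Rightarrow> nat \<Rightarrow> 'a list set" where
  "words_of_length L n = {w \<in> L. length w = n}"

definition right_excess :: "'a list set \<Rightarrow> 'a list \<Rightarrow> nat" where
  "right_excess L w = card (ext_right L w) - 1"

definition total_right_excess :: "'a list set \<Rightarrow> nat \<Rightarrow> nat" where
  "total_right_excess L n = (\<Sum>w\<in>words_of_length L n. right_excess L w)"

lemma finite_words_of_length: "finite (words_of_length (L :: 'a::finite list set) n)"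
proof (rule finite_subset)
  show "words_of_length L n \<subseteq> {xs. set xs \<subseteq> UNIV \<and> length xs = n}"
    by (auto simp: words_of_length_def)
  show "finite {xs :: 'a list. set xs \<subseteq> UNIV \<and> length xs = n}"
    by (rule finite_lists_length_eq) simp
qed

lemma language_sublist_closed:
  assumes "is_language L" "w \<in> L" "v \<noteq> []" "sublist v w"
  shows "v \<in> L"
  using assms unfolding is_language_def by blast

lemma language_Cons_snoc_ext:
  assumes "is_language L" "w \<in> L"
  obtains a b where "a # w @ [b] \<in> L"
  using assms unfolding is_language_def by auto

lemma language_tl_closed:
  assumes "is_language L" "a # w \<in> L" "w \<noteq> []"
  shows "w \<in> L"
  by (rule language_sublist_closed[OF assms]) (simp add: sublist_Cons_right)

lemma language_butlast_closed:
  assumes "is_language L" "w @ [b] \<in> L" "w \<noteq> []"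
  shows "w \<in> L"
  by (rule language_sublist_closed[OF assms]) simp

lemma ext_right_nonempty:
  assumes "is_language L" "w \<in> L"
  shows "ext_right L w \<noteq> {}"
proof -
  obtain a b where "a # w @ [b] \<in> L"
    using language_Cons_snoc_ext[OF assms] .
  then have "w @ [b] \<in> L"
    by (rule language_tl_closed[OF assms(1)]) simp
  then show ?thesis by (auto simp: ext_right_def)
qed

lemma ext_right_Cons_subset:
  assumes "is_language L"
  shows "ext_right L (a # w) \<subseteq> ext_right L w"
proof
  fix b assume "b \<in> ext_right L (a # w)"
  then have "a # (w @ [b]) \<in> L" by (simp add: ext_right_def)
  then have "w @ [b] \<in> L" by (rule language_tl_closed[OF assms]) simp
  then show "b \<in> ext_right L w" by (simp add: ext_right_def)
qed

lemma card_ext_right_Cons_le: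
  assumes "is_language (L :: 'a::finite list set)"
  shows "card (ext_right L (a # w)) \<le> card (ext_right L w)"
  by (intro card_mono ext_right_Cons_subset[OF assms]) simp

lemma right_excess_Cons_le:
  assumes "is_language (L :: 'a::finite list set)"
  shows "right_excess L (a # w) \<le> right_excess L w"
  unfolding right_excess_def using card_ext_right_Cons_le[OF assms] by (rule diff_le_mono)

lemma right_excess_eq_0_if_not_right_special:
  assumes "w \<in> L" "\<not> right_special L w"
  shows "right_excess L w = 0"
  using assms by (simp add: right_excess_def right_special_def)

lemma complexity_Suc_eq_sum_ext_right:
  fixes L :: "'a::finite list set"
  assumes lang: "is_language L" and "n \<ge> 1"
  shows "complexity L (Suc n) = (\<Sum>w\<in>words_of_length L n. card (ext_right L w))"
proof -
  let ?S = "SIGMA w:words_of_length L n. ext_right L w"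
  let ?snoc = "\<lambda>(w, b). w @ [b]"
  have "?snoc ` ?S = words_of_length L (Suc n)"
  proof (intro equalityI subsetI)
    fix u assume u: "u \<in> words_of_length L (Suc n)"
    then obtain w b where u_eq: "u = w @ [b]"
      by (cases u rule: rev_cases) (auto simp: words_of_length_def)
    with u \<open>n \<ge> 1\<close> have "w \<noteq> []" by (auto simp: words_of_length_def)
    with u u_eq have "w \<in> L"
      using language_butlast_closed[OF lang _ \<open>w \<noteq> []\<close>] by (auto simp: words_of_length_def)
    with u u_eq have "(w, b) \<in> ?S"
      by (auto simp: words_of_length_def ext_right_def)
    with u_eq show "u \<in> ?snoc ` ?S" by force
  qed (auto simp: words_of_length_def ext_right_def)
  moreover have "inj_on ?snoc ?S" by (auto simp: inj_on_def)
  ultimately have "complexity L (Suc n) = card ?S"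
    by (simp add: complexity_def words_of_length_def[symmetric] card_image[symmetric])
  also have "\<dots> = (\<Sum>w\<in>words_of_length L n. card (ext_right L w))"
    by (rule card_SigmaI) (auto simp: finite_words_of_length)
  finally show ?thesis .
qed

lemma complexity_Suc_diff:
  fixes L :: "'a::finite list set"
  assumes lang: "is_language L" and "n \<ge> 1"
  shows "int (complexity L (Suc n)) - int (complexity L n) = int (total_right_excess L n)"
proof -
  have "complexity L (Suc n) = (\<Sum>w\<in>words_of_length L n. right_excess L w + 1)"
    unfolding complexity_Suc_eq_sum_ext_right[OF assms]
  proof (rule sum.cong)
    fix w assume "w \<in> words_of_length L n"
    then have "card (ext_right L w) > 0"
      using ext_right_nonempty[OF lang] by (simp add: card_gt_0_iff words_of_length_def)
    then show "card (ext_right L w) = right_excess L w + 1"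
      by (simp add: right_excess_def)
  qed simp
  also have "\<dots> = total_right_excess L n + complexity L n"
    by (simp add: sum_Suc total_right_excess_def complexity_def words_of_length_def)
  finally show ?thesis by simp
qed

lemma total_right_excess_Suc:
  fixes L :: "'a::finite list set"
  assumes lang: "is_language L" and "n \<ge> 1"
  shows "total_right_excess L (Suc n) =
    (\<Sum>w\<in>words_of_length L n. \<Sum>a\<in>ext_left L w. right_excess L (a # w))"
proof -
  let ?S = "SIGMA w:words_of_length L n. ext_left L w"
  let ?cons = "\<lambda>(w, a). a # w"
  have "?cons ` ?S = words_of_length L (Suc n)"
  proof (intro equalityI subsetI)
    fix u assume u: "u \<in> words_of_length L (Suc n)"
    then obtain a w where u_eq: "u = a # w"
      by (cases u) (auto simp: words_of_length_def)
    with u \<open>n \<ge> 1\<close> have "w \<noteq> []" by (auto simp: words_of_length_def)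
    with u u_eq have "w \<in> L"
      using language_tl_closed[OF lang _ \<open>w \<noteq> []\<close>] by (auto simp: words_of_length_def)
    with u u_eq have "(w, a) \<in> ?S"
      by (auto simp: words_of_length_def ext_left_def)
    with u_eq show "u \<in> ?cons ` ?S" by force
  qed (auto simp: words_of_length_def ext_left_def)
  then have "total_right_excess L (Suc n) = sum (right_excess L) (?cons ` ?S)"
    by (simp add: total_right_excess_def)
  also have "\<dots> = sum (right_excess L \<circ> ?cons) ?S"
    by (rule sum.reindex) (auto simp: inj_on_def)
  also have "\<dots> = (\<Sum>w\<in>words_of_length L n. \<Sum>a\<in>ext_left L w. right_excess L (a # w))"
    by (subst sum.Sigma) (auto simp: finite_words_of_length split_def)
  finally show ?thesis .
qed

lemma sum_right_excess_left_ext_le: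
  fixes L :: "'a::finite list set"
  assumes lang: "is_language L"
    and uniq: "\<exists>\<^sub>\<le>\<^sub>1 a. a \<in> ext_left L w \<and> right_special L (a # w)"
  shows "(\<Sum>a\<in>ext_left L w. right_excess L (a # w)) \<le> right_excess L w"
proof (cases "\<exists>a\<in>ext_left L w. right_special L (a # w)")
  case False
  then have "\<forall>a\<in>ext_left L w. right_excess L (a # w) = 0"
    by (auto intro: right_excess_eq_0_if_not_right_special simp: ext_left_def)
  then show ?thesis by simp
next
  case True
  then obtain a0 where a0: "a0 \<in> ext_left L w" "right_special L (a0 # w)" by blast
  have "right_excess L (a # w) = 0" if "a \<in> ext_left L w - {a0}" for a
  proof (rule right_excess_eq_0_if_not_right_special)
    show "a # w \<in> L" using that by (simp add: ext_left_def)
    show "\<not> right_special L (a # w)"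
    proof
      assume "right_special L (a # w)"
      with that a0 have "a = a0" by (intro Uniq_D[OF uniq]) auto
      with that show False by simp
    qed
  qed
  then have "(\<Sum>a\<in>ext_left L w - {a0}. right_excess L (a # w)) = 0"
    by (rule sum.neutral[OF ballI])
  then have "(\<Sum>a\<in>ext_left L w. right_excess L (a # w)) = right_excess L (a0 # w)"
    using sum.remove[OF _ a0(1), of "\<lambda>a. right_excess L (a # w)"] by simp
  also have "\<dots> \<le> right_excess L w"
    by (rule right_excess_Cons_le[OF lang])
  finally show ?thesis .
qed

lemma unique_right_special_left_ext:
  fixes L :: "'a::finite list set"
  assumes lang: "is_language L" and "w \<in> L"
    and regular: "bispecial L w \<Longrightarrow> regular_bispecial L w"
  shows "\<exists>\<^sub>\<le>\<^sub>1 a. a \<in> ext_left L w \<and> right_special L (a # w)"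
proof (cases "left_special L w")
  case False
  then have "card (ext_left L w) \<le> 1"
    using \<open>w \<in> L\<close> by (simp add: left_special_def)
  then show ?thesis by (auto intro: Uniq_I simp: card_le_Suc0_iff_eq)
next
  case left: True
  show ?thesis
  proof (cases "right_special L w")
    case False
    have "\<not> right_special L (a # w)" for a
      using False \<open>w \<in> L\<close> card_ext_right_Cons_le[OF lang, of a w]
      by (simp add: right_special_def)
    then show ?thesis by (simp add: Uniq_def)
  next
    case True
    with left regular have "\<exists>!a. a \<in> ext_left L w \<and> right_special L (a # w)"
      by (simp add: bispecial_def regular_bispecial_def)
    then show ?thesis by (simp add: ex1_iff_ex_Uniq)
  qed
qed

lemma nat_seq_eventually_constant:
  fixes s :: "nat \<Rightarrow> nat"
  assumes "\<And>n. n \<ge> N1 \<Longrightarrow> s (Suc n) \<le> s n"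
  obtains N where "\<And>n. n \<ge> N \<Longrightarrow> s n = s N"
proof -
  obtain N where "N \<ge> N1" and least: "\<And>n. n \<ge> N1 \<Longrightarrow> s N \<le> s n"
    using ex_has_least_nat[of "\<lambda>n. n \<ge> N1" N1 s] by auto
  have "s n \<le> s N" if "n \<ge> N" for n
    using that
  proof (induction n rule: dec_induct)
    case (step m)
    then show ?case using assms[of m] \<open>N \<ge> N1\<close> by simp
  qed simp
  with least \<open>N \<ge> N1\<close> have "\<And>n. n \<ge> N \<Longrightarrow> s n = s N"
    by (meson antisym le_trans)
  then show ?thesis by (rule that)
qed

theorem mainTheorem3:
  fixes L :: "'a::finite list set"
  assumes "is_language L" and "RBC L"
  shows "\<exists>N0 (K::int). \<forall>n\<ge>N0.
           int (complexity L (Suc n)) - int (complexity L n) = K"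
proof -
  obtain n0 where rbc: "\<And>w. bispecial L w \<Longrightarrow> length w \<ge> n0 \<Longrightarrow> regular_bispecial L w"
    using assms(2) by (auto simp: RBC_def)
  have decreasing: "total_right_excess L (Suc n) \<le> total_right_excess L n"
    if "n \<ge> max n0 1" for n
  proof -
    have "total_right_excess L (Suc n) =
      (\<Sum>w\<in>words_of_length L n. \<Sum>a\<in>ext_left L w. right_excess L (a # w))"
      using total_right_excess_Suc[OF assms(1)] that by simp
    also have "\<dots> \<le> total_right_excess L n"
      unfolding total_right_excess_def using that
      by (intro sum_mono sum_right_excess_left_ext_le[OF assms(1)]
          unique_right_special_left_ext[OF assms(1)] rbc) (auto simp: words_of_length_def)
    finally show ?thesis .
  qed
  obtain N where N: "\<And>n. n \<ge> N \<Longrightarrow> total_right_excess L n = total_right_excess L N"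
    using nat_seq_eventually_constant[of "max n0 1" "total_right_excess L"] decreasing
    by blast
  have "int (complexity L (Suc n)) - int (complexity L n) = int (total_right_excess L N)"
    if "n \<ge> max N 1" for n
    using complexity_Suc_diff[OF assms(1), of n] N[of n] that by simp
  then show ?thesis by blast
qed

end
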